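(* Let $r\geq 2$ and $n>r^{8}$. Every graph $G$ of order $n$ with $e(G)>t_r(n)$ has an induced subgraph $G'$ of order $n'>(1-1/r^{2})n$ such that either $$K_{r+1}\subseteq G'\quad\text{and}\quad\delta(G')>\left(\frac{r-1}{r}-\frac{1}{r^{2}(r^{2}-1)}\right)n',$$ or $$e(G')>\left(\frac{r-1}{2r}+\frac{1}{r^{4}(r^{2}-1)}\right)(n')^{2}.$$
   Context: All graphs are finite and simple; $e(G)$ is the number of edges and $\delta(G)$ the minimum degree. $T_r(n)$ denotes the Turán graph: the complete $r$-partite graph on $n$ vertices whose $r$ parts have sizes as equal as possible (differing by at most one); $t_r(n)=e(T_r(n))$. $K_{r+1}$ is the complete graph on $r+1$ vertices. *)

theory Defs
  imports Complex_Main
begin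

text \<open>A finite simple graph is given by a finite vertex set V and a symmetric,
irreflexive adjacency relation E; only adjacencies between vertices of V count.
The induced subgraph on U \<subseteq> V is (U, E).\<close>

definition simple_graph :: "'a set \<Rightarrow> ('a \<Rightarrow> 'a \<Rightarrow> bool) \<Rightarrow> bool" where
  "simple_graph V E \<longleftrightarrow> finite V \<and> (\<forall>x y. E x y \<longrightarrow> E y x) \<and> (\<forall>x. \<not> E x x)"

definition edges :: "'a set \<Rightarrow> ('a \<Rightarrow> 'a \<Rightarrow> bool) \<Rightarrow> 'a set set" where
  "edges V E = {{x, y} | x y. x \<in> V \<and> y \<in> V \<and> E x y}"

definition num_edges :: "'a set \<Rightarrow> ('a \<Rightarrow> 'a \<Rightarrow> bool) \<Rightarrow> nat" where
  "num_edges V E = card (edges V E)"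

definition degree :: "'a set \<Rightarrow> ('a \<Rightarrow> 'a \<Rightarrow> bool) \<Rightarrow> 'a \<Rightarrow> nat" where
  "degree V E v = card {u \<in> V. E v u}"

definition min_degree :: "'a set \<Rightarrow> ('a \<Rightarrow> 'a \<Rightarrow> bool) \<Rightarrow> nat" where
  "min_degree V E = Min ((degree V E) ` V)"

definition has_clique :: "'a set \<Rightarrow> ('a \<Rightarrow> 'a \<Rightarrow> bool) \<Rightarrow> nat \<Rightarrow> bool" where
  "has_clique V E k \<longleftrightarrow> (\<exists>S \<subseteq> V. card S = k \<and> (\<forall>x\<in>S. \<forall>y\<in>S. x \<noteq> y \<longrightarrow> E x y))"

text \<open>Turan graph T_r(n): vertices 0..n-1, vertex i in part (i mod r); parts have sizes
as equal as possible; edges join vertices in distinct parts.\<close>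
definition turan_adj :: "nat \<Rightarrow> nat \<Rightarrow> nat \<Rightarrow> bool" where
  "turan_adj r i j \<longleftrightarrow> i mod r \<noteq> j mod r"

definition turan_num :: "nat \<Rightarrow> nat \<Rightarrow> nat" where
  "turan_num r n = num_edges {0..<n} (turan_adj r)"

end

theory Submission
  imports Defs
begin

text \<open>Let \<open>c = (r - 1) / (2 r)\<close>, \<open>\<beta> = 1 / (r\<^sup>2 (r\<^sup>2 - 1))\<close>, \<open>\<gamma> = 1 / (r\<^sup>4 (r\<^sup>2 - 1))\<close> and
\<open>L = (1 - 1 / r\<^sup>2) n\<close>. Starting from \<open>G\<close>, delete vertices of degree at most \<open>(2 c - \<beta>) |U|\<close>
from the current vertex set \<open>U\<close> as long as \<open>e(U) \<le> (c + \<gamma>) |U|\<^sup>2\<close>. Such a deletion keeps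
\<open>e(U) > t\<^sub>r(|U|)\<close>, and it raises the potential \<open>e(U) - c |U|\<^sup>2\<close> by at least \<open>\<beta> |U| - c \<ge> \<beta> L - c\<close>.
The potential starts at \<open>\<ge> -c n\<close> since \<open>t\<^sub>r(n) \<ge> c (n\<^sup>2 - n)\<close>, so for \<open>n > r\<^sup>8\<close> it exceeds \<open>\<gamma> |U|\<^sup>2\<close>
before \<open>|U|\<close> drops to \<open>L\<close>. Hence the process stops at some \<open>|U| > L\<close>, either with
\<open>e(U) > (c + \<gamma>) |U|\<^sup>2\<close> or with minimum degree \<open>> (2 c - \<beta>) |U|\<close>; in the latter case Turan's
theorem applied to \<open>e(U) > t\<^sub>r(|U|)\<close> provides the \<open>K\<^sub>r\<^sub>+\<^sub>1\<close>.\<close>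

definition is_clique :: "('a \<Rightarrow> 'a \<Rightarrow> bool) \<Rightarrow> 'a set \<Rightarrow> bool" where
  "is_clique E S \<longleftrightarrow> (\<forall>x\<in>S. \<forall>y\<in>S. x \<noteq> y \<longrightarrow> E x y)"

lemma has_clique_iff: "has_clique V E k \<longleftrightarrow> (\<exists>S\<subseteq>V. card S = k \<and> is_clique E S)"
  by (simp add: has_clique_def is_clique_def)

lemma has_clique_mono: "has_clique U E k \<Longrightarrow> U \<subseteq> V \<Longrightarrow> has_clique V E k"
  by (auto simp: has_clique_def)

lemma simple_graph_subset: "simple_graph V E \<Longrightarrow> U \<subseteq> V \<Longrightarrow> simple_graph U E"
  by (auto simp: simple_graph_def intro: finite_subset)

lemma finite_edges: "finite V \<Longrightarrow> finite (edges V E)"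
proof -
  have "edges V E \<subseteq> Pow V"
    unfolding edges_def by auto
  then show "finite V \<Longrightarrow> ?thesis"
    by (metis finite_Pow_iff finite_subset)
qed

lemma num_edges_empty [simp]: "num_edges {} E = 0"
  by (simp add: num_edges_def edges_def)

lemma num_edges_insert:
  assumes G: "simple_graph (insert v W) E" and v: "v \<notin> W"
  shows "num_edges (insert v W) E = num_edges W E + degree W E v"
proof -
  have fin: "finite W" and sym: "\<And>x y. E x y \<Longrightarrow> E y x" and irr: "\<And>x. \<not> E x x"
    using G by (auto simp: simple_graph_def)
  let ?new = "(\<lambda>u. {v, u}) ` {u \<in> W. E v u}"
  have split: "edges (insert v W) E = edges W E \<union> ?new"
    unfolding edges_def using sym irr by (auto simp: doubleton_eq_iff)
  have "edges W E \<inter> ?new = {}"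
    unfolding edges_def using v by (auto simp: doubleton_eq_iff)
  moreover have "inj_on (\<lambda>u. {v, u}) {u \<in> W. E v u}"
    using v by (auto simp: inj_on_def doubleton_eq_iff)
  ultimately show ?thesis
    unfolding num_edges_def degree_def split using fin
    by (simp add: card_Un_disjoint finite_edges card_image)
qed

lemma degree_Diff_self: "simple_graph U E \<Longrightarrow> degree (U - {v}) E v = degree U E v"
  unfolding degree_def simple_graph_def by (metis Diff_iff singletonD)

lemma num_edges_Diff_vertex:
  assumes "simple_graph U E" "v \<in> U"
  shows "num_edges U E = num_edges (U - {v}) E + degree U E v"
  using num_edges_insert[of v "U - {v}" E] assms by (simp add: insert_absorb degree_Diff_self)

lemma degree_Un_disjoint:
  "finite A \<Longrightarrow> finite B \<Longrightarrow> A \<inter> B = {} \<Longrightarrow> degree (A \<union> B) E v = degree A E v + degree B E v"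
  unfolding degree_def by (subst card_Un_disjoint[symmetric]) (auto intro: arg_cong[where f = card])

lemma num_edges_Un_disjoint:
  assumes "simple_graph (A \<union> B) E" "A \<inter> B = {}"
  shows "num_edges (A \<union> B) E = num_edges A E + num_edges B E + (\<Sum>b\<in>B. degree A E b)"
proof -
  have "finite B" using assms(1) by (simp add: simple_graph_def)
  then show ?thesis
    using assms
  proof (induction B rule: finite_induct)
    case empty
    then show ?case by simp
  next
    case (insert b B)
    have fin: "finite A" "finite B"
      using insert.prems(1) by (auto simp: simple_graph_def)
    have "num_edges (A \<union> insert b B) E = num_edges (A \<union> B) E + degree (A \<union> B) E b"
      using insert num_edges_insert[of b "A \<union> B" E] by auto
    moreover have "num_edges (insert b B) E = num_edges B E + degree B E b"
      using insert simple_graph_subset[OF insert.prems(1), of "insert b B"] by (intro num_edges_insert) auto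
    moreover have "degree (A \<union> B) E b = degree A E b + degree B E b"
      using insert fin by (intro degree_Un_disjoint) auto
    moreover have "num_edges (A \<union> B) E = num_edges A E + num_edges B E + (\<Sum>b\<in>B. degree A E b)"
      using insert simple_graph_subset[OF insert.prems(1), of "A \<union> B"] by (intro insert.IH) auto
    ultimately show ?case
      using insert by simp
  qed
qed

lemma num_edges_le_sum_lessThan: "simple_graph A E \<Longrightarrow> num_edges A E \<le> (\<Sum>j<card A. j)"
proof (induction "card A" arbitrary: A)
  case 0
  then show ?case by (simp add: simple_graph_def)
next
  case (Suc m)
  then obtain a where a: "a \<in> A"
    by (metis card_eq_0_iff ex_in_conv nat.distinct(1))
  have G': "simple_graph (A - {a}) E"
    using Suc.prems by (rule simple_graph_subset) auto
  have fin: "finite A"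
    using Suc.prems by (simp add: simple_graph_def)
  have "degree A E a \<le> m"
  proof -
    have "{u \<in> A. E a u} \<subseteq> A - {a}"
      using Suc.prems by (auto simp: simple_graph_def)
    then show ?thesis
      unfolding degree_def using fin a Suc.hyps(2) by (metis card_Diff_singleton card_mono diff_Suc_1 finite_Diff)
  qed
  moreover have "num_edges (A - {a}) E \<le> (\<Sum>j<m. j)"
    using Suc.hyps a fin G' by (metis card_Diff_singleton diff_Suc_1)
  ultimately show ?case
    using num_edges_Diff_vertex[OF Suc.prems a] by (simp flip: Suc.hyps(2))
qed

lemma min_degree_gt_iff:
  assumes "finite U" "U \<noteq> {}"
  shows "t < real (min_degree U E) \<longleftrightarrow> (\<forall>v\<in>U. t < real (degree U E v))"
proof -
  have "min_degree U E \<in> degree U E ` U"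
    unfolding min_degree_def using assms by simp
  then obtain w where "w \<in> U" "min_degree U E = degree U E w"
    by auto
  moreover have "\<And>v. v \<in> U \<Longrightarrow> real (min_degree U E) \<le> real (degree U E v)"
    unfolding min_degree_def using assms(1) by simp
  ultimately show ?thesis
    by (auto intro: less_le_trans)
qed

section \<open>Turan's theorem\<close>

text \<open>Vertex \<open>i\<close> of \<open>T\<^sub>r(m)\<close> has exactly \<open>i - i div r\<close> neighbours below it, so
\<open>turan_sum r m = t\<^sub>r(m)\<close>; only the inequality \<open>turan_sum r m \<le> turan_num r m\<close> is needed.\<close>

definition turan_sum :: "nat \<Rightarrow> nat \<Rightarrow> nat" where
  "turan_sum r m = (\<Sum>i<m. i - i div r)"

lemma turan_sum_Suc: "turan_sum r (Suc m) = turan_sum r m + (m - m div r)"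
  by (simp add: turan_sum_def)

lemma turan_sum_add: "turan_sum r (a + s) = turan_sum r a + (\<Sum>j<s. (a + j) - (a + j) div r)"
proof (induction s)
  case (Suc s)
  have "turan_sum r (a + Suc s) = turan_sum r (a + s) + ((a + s) - (a + s) div r)"
    by (simp add: turan_sum_Suc)
  then show ?case
    using Suc.IH by (simp only: sum.lessThan_Suc add.assoc)
qed simp

lemma hermite_identity:
  fixes a r :: nat
  assumes "0 < r"
  shows "(\<Sum>j<r. (a + j) div r) = a"
proof (induction a)
  case 0
  have "(\<Sum>j<r. j div r) = (\<Sum>j<r. 0 :: nat)"
    by (intro sum.cong) auto
  then show ?case by simp
next
  case (Suc a)
  obtain k where k: "r = Suc k"
    using assms by (cases r) auto
  have "(\<Sum>j<r. (a + j) div r) = a div r + (\<Sum>j<k. (a + Suc j) div r)"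
    unfolding k by (subst sum.lessThan_Suc_shift) simp
  moreover have "(\<Sum>j<r. (Suc a + j) div r) = (\<Sum>j<k. (a + Suc j) div r) + (a + r) div r"
    unfolding k by (simp add: sum.lessThan_Suc)
  moreover have "(a + r) div r = a div r + 1"
    using assms by simp
  ultimately show ?case
    using Suc.IH by simp
qed

lemma turan_sum_add_le:
  assumes "0 < r" "s \<le> r"
  shows "turan_sum r a + (\<Sum>j<s. j) + a * (s - 1) \<le> turan_sum r (a + s)"
proof -
  have "(\<Sum>j<s. (a + j) div r) \<le> (\<Sum>j<r. (a + j) div r)"
    using assms by (intro sum_mono2) auto
  then have div_sum: "(\<Sum>j<s. (a + j) div r) \<le> a"
    using hermite_identity[OF assms(1)] by simp
  have "(\<Sum>j<s. (a + j) - (a + j) div r) = (\<Sum>j<s. a + j) - (\<Sum>j<s. (a + j) div r)"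
    by (rule sum_subtractf_nat) simp
  also have "(\<Sum>j<s. a + j) = s * a + (\<Sum>j<s. j)"
    by (simp add: sum.distrib)
  finally show ?thesis
    unfolding turan_sum_add using div_sum by (cases s) (simp_all add: algebra_simps)
qed

lemma obtain_maximum_clique:
  assumes "finite V"
  obtains S where "S \<subseteq> V" "is_clique E S" "\<And>T. T \<subseteq> V \<Longrightarrow> is_clique E T \<Longrightarrow> card T \<le> card S"
proof -
  have "\<exists>S. (S \<subseteq> V \<and> is_clique E S) \<and> (\<forall>T. T \<subseteq> V \<and> is_clique E T \<longrightarrow> card T \<le> card S)"
  proof (rule ex_has_greatest_nat[where k = "{}" and b = "Suc (card V)"])
    show "{} \<subseteq> V \<and> is_clique E {}"
      by (simp add: is_clique_def)
    show "\<forall>T. T \<subseteq> V \<and> is_clique E T \<longrightarrow> card T < Suc (card V)"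
      using assms by (simp add: card_mono le_imp_less_Suc)
  qed
  then show ?thesis
    using that by blast
qed

lemma card_clique_le:
  assumes "S \<subseteq> V" "is_clique E S" "\<not> has_clique V E (r + 1)"
  shows "card S \<le> r"
proof (rule ccontr)
  assume "\<not> card S \<le> r"
  then have "r + 1 \<le> card S"
    by simp
  then obtain T where T: "T \<subseteq> S" "card T = r + 1"
    by (rule obtain_subset_with_card_n)
  have "has_clique V E (r + 1)"
    unfolding has_clique_iff
  proof (intro exI conjI)
    show "T \<subseteq> V" "card T = r + 1"
      using T assms(1) by auto
    show "is_clique E T"
      using assms(2) T(1) unfolding is_clique_def by blast
  qed
  with assms(3) show False ..
qed

lemma degree_maximum_clique_less:
  assumes G: "simple_graph V E" and S: "S \<subseteq> V" "is_clique E S"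
    and max: "\<And>T. T \<subseteq> V \<Longrightarrow> is_clique E T \<Longrightarrow> card T \<le> card S"
    and w: "w \<in> V - S"
  shows "degree S E w < card S"
proof (rule ccontr)
  assume "\<not> degree S E w < card S"
  moreover have fin: "finite S"
    using G S(1) by (auto simp: simple_graph_def intro: finite_subset)
  ultimately have "{u \<in> S. E w u} = S"
    unfolding degree_def using fin by (intro card_seteq) auto
  then have "\<forall>u\<in>S. E w u \<and> E u w"
    using G unfolding simple_graph_def by blast
  then have "is_clique E (insert w S)"
    using S(2) unfolding is_clique_def by auto
  then have "card (insert w S) \<le> card S"
    using max S(1) w by blast
  with fin w show False
    by simp
qed

theorem turan:
  assumes "0 < r" "simple_graph V E" "\<not> has_clique V E (r + 1)"
  shows "num_edges V E \<le> turan_sum r (card V)"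
  using assms(2,3)
proof (induction "card V" arbitrary: V rule: less_induct)
  case less
  have finV: "finite V"
    using less.prems(1) by (simp add: simple_graph_def)
  show ?case
  proof (cases "V = {}")
    case True
    then show ?thesis by simp
  next
    case False
    obtain S where S: "S \<subseteq> V" "is_clique E S"
      and max: "\<And>T. T \<subseteq> V \<Longrightarrow> is_clique E T \<Longrightarrow> card T \<le> card S"
      using obtain_maximum_clique[OF finV] by metis
    obtain v where "v \<in> V"
      using False by blast
    then have "1 \<le> card S"
      using max[of "{v}"] by (simp add: is_clique_def)
    define W where "W = V - S"
    have V: "V = S \<union> W" "S \<inter> W = {}"
      unfolding W_def using S(1) by auto
    have finSW: "finite S" "finite W"
      using V(1) finV by auto
    have cardV: "card V = card W + card S"
      using V finSW by (simp add: card_Un_disjoint)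
    have "W \<subseteq> V"
      unfolding W_def by blast
    then have "num_edges W E \<le> turan_sum r (card W)"
      using less.prems \<open>1 \<le> card S\<close> cardV has_clique_mono[of W E "r + 1" V]
      by (intro less.hyps simple_graph_subset[OF less.prems(1)]) auto
    moreover have "num_edges S E \<le> (\<Sum>j<card S. j)"
      using simple_graph_subset[OF less.prems(1) S(1)] by (rule num_edges_le_sum_lessThan)
    moreover have "(\<Sum>w\<in>W. degree S E w) \<le> (\<Sum>w\<in>W. card S - 1)"
      using degree_maximum_clique_less[OF less.prems(1) S max]
      by (intro sum_mono) (fastforce simp: W_def)
    ultimately have "num_edges V E \<le> turan_sum r (card W) + (\<Sum>j<card S. j) + card W * (card S - 1)"
      using num_edges_Un_disjoint[of S W E] less.prems(1) V by simp
    also have "\<dots> \<le> turan_sum r (card V)"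
      using turan_sum_add_le[OF assms(1) card_clique_le[OF S less.prems(2)]] cardV by simp
    finally show ?thesis .
  qed
qed

lemma degree_turan_adj_ge:
  assumes "0 < r"
  shows "n - n div r \<le> degree {0..<n} (turan_adj r) n"
proof -
  define Q where "Q = {u \<in> {0..<n}. u mod r = n mod r}"
  have "inj_on (\<lambda>u. u div r) Q"
  proof (rule inj_onI)
    fix x y assume "x \<in> Q" "y \<in> Q" "x div r = y div r"
    moreover from this have "x mod r = y mod r"
      unfolding Q_def by simp
    ultimately show "x = y"
      by (metis div_mult_mod_eq)
  qed
  moreover have "(\<lambda>u. u div r) ` Q \<subseteq> {..<n div r}"
  proof
    fix z assume "z \<in> (\<lambda>u. u div r) ` Q"
    then obtain u where u: "u < n" "u mod r = n mod r" "z = u div r"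
      unfolding Q_def by auto
    then have "u div r * r < n div r * r"
      using div_mult_mod_eq[of u r] div_mult_mod_eq[of n r] by linarith
    then show "z \<in> {..<n div r}"
      using u(3) by simp
  qed
  ultimately have "card Q \<le> n div r"
    using card_mono[of "{..<n div r}" "(\<lambda>u. u div r) ` Q"] by (simp add: card_image)
  moreover have "{u \<in> {0..<n}. turan_adj r n u} = {0..<n} - Q"
    unfolding Q_def turan_adj_def by auto
  moreover have "card ({0..<n} - Q) = n - card Q"
    unfolding Q_def by (subst card_Diff_subset) auto
  ultimately show ?thesis
    unfolding degree_def by simp
qed

lemma turan_sum_le_turan_num:
  assumes "0 < r"
  shows "turan_sum r n \<le> turan_num r n"
proof (induction n)
  case 0
  then show ?case by (simp add: turan_sum_def)
next
  case (Suc n)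
  have "simple_graph {0..<Suc n} (turan_adj r)"
    by (simp add: simple_graph_def turan_adj_def)
  then have "turan_num r (Suc n) = turan_num r n + degree {0..<n} (turan_adj r) n"
    unfolding turan_num_def using num_edges_insert[of n "{0..<n}" "turan_adj r"]
    by (simp add: atLeast0_lessThan_Suc)
  then show ?case
    using Suc degree_turan_adj_ge[OF assms, of n] by (simp add: turan_sum_Suc)
qed

definition turan_density :: "nat \<Rightarrow> real" where
  "turan_density r = (real r - 1) / (2 * real r)"

lemma turan_sum_ge:
  assumes "0 < r"
  shows "turan_density r * (real n ^ 2 - real n) \<le> real (turan_sum r n)"
proof (induction n)
  case 0
  then show ?case by (simp add: turan_sum_def)
next
  case (Suc n)
  have "real n - real n / real r \<le> real (n - n div r)"
    using of_nat_div_le_of_nat[of n r] by (simp add: of_nat_diff)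
  moreover have "turan_density r * (real (Suc n) ^ 2 - real (Suc n))
      = turan_density r * (real n ^ 2 - real n) + (real n - real n / real r)"
    using assms by (simp add: turan_density_def field_simps power2_eq_square)
  ultimately show ?case
    using Suc by (simp add: turan_sum_Suc)
qed

section \<open>Deleting vertices of low degree\<close>

lemma potential_Diff_low_degree_vertex:
  fixes c \<beta> :: real
  assumes "simple_graph U E" "v \<in> U" "real (degree U E v) \<le> (2 * c - \<beta>) * real (card U)"
  shows "real (num_edges U E) - c * real (card U) ^ 2 + \<beta> * real (card U) - c
    \<le> real (num_edges (U - {v}) E) - c * real (card (U - {v})) ^ 2"
proof -
  have "finite U"
    using assms(1) by (simp add: simple_graph_def)
  then have card: "real (card U) = real (card (U - {v})) + 1"
    using assms(2) card_Suc_Diff1 by fastforce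
  have edges: "real (num_edges U E) = real (num_edges (U - {v}) E) + real (degree U E v)"
    using num_edges_Diff_vertex[OF assms(1,2)] by simp
  show ?thesis
    using assms(3) unfolding card edges by (simp add: algebra_simps power2_eq_square)
qed

lemma low_degree_le_turan_degree:
  fixes d \<beta> :: real
  assumes "0 < r" "1 \<le> \<beta> * real (Suc m)" "d \<le> (2 * turan_density r - \<beta>) * real (Suc m)"
  shows "d \<le> real (m - m div r)"
proof -
  have "2 * turan_density r * real (Suc m) = real m - real m / real r + (real r - 1) / real r"
    using assms(1) by (simp add: turan_density_def field_simps)
  moreover have "(real r - 1) / real r \<le> 1"
    using assms(1) by simp
  moreover have "real m - real m / real r \<le> real (m - m div r)"
    using of_nat_div_le_of_nat[of m r] by (simp add: of_nat_diff)
  moreover have "(2 * turan_density r - \<beta>) * real (Suc m) = 2 * turan_density r * real (Suc m) - \<beta> * real (Suc m)"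
    by (simp add: algebra_simps)
  ultimately show ?thesis
    using assms(2,3) by linarith
qed

lemma delete_low_degree_vertex:
  fixes r :: nat and \<beta> L N p :: real
  defines "c \<equiv> turan_density r"
  assumes r: "0 < r" and \<beta>: "0 \<le> \<beta>" "1 \<le> \<beta> * L"
    and G: "simple_graph V E" and card: "card V = Suc m" "L < real (Suc m)"
    and turan: "turan_sum r (Suc m) < num_edges V E"
    and potential: "p + (N - real (Suc m)) * (\<beta> * L - c) \<le> real (num_edges V E) - c * real (Suc m) ^ 2"
    and v: "v \<in> V" "real (degree V E v) \<le> (2 * c - \<beta>) * real (Suc m)"
  shows "turan_sum r m < num_edges (V - {v}) E"
    and "p + (N - real m) * (\<beta> * L - c) \<le> real (num_edges (V - {v}) E) - c * real m ^ 2"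
proof -
  have card_Diff: "card (V - {v}) = m"
    using G v(1) card(1) by (simp add: simple_graph_def)
  have gain: "\<beta> * L \<le> \<beta> * real (Suc m)"
    using card(2) \<beta>(1) by (simp add: mult_left_mono)
  have "real (degree V E v) \<le> real (m - m div r)"
    using low_degree_le_turan_degree[OF r _ v(2)[unfolded c_def]] \<beta>(2) gain by linarith
  then have "degree V E v \<le> m - m div r"
    by simp
  then show "turan_sum r m < num_edges (V - {v}) E"
    using turan num_edges_Diff_vertex[OF G v(1)] unfolding turan_sum_Suc by linarith
  have "p + (N - real m) * (\<beta> * L - c) = p + (N - real (Suc m)) * (\<beta> * L - c) + (\<beta> * L - c)"
    by (simp add: algebra_simps)
  also have "\<dots> \<le> real (num_edges V E) - c * real (Suc m) ^ 2 + \<beta> * real (Suc m) - c"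
    using potential gain by linarith
  also have "\<dots> \<le> real (num_edges (V - {v}) E) - c * real m ^ 2"
    using potential_Diff_low_degree_vertex[OF G v(1), of c \<beta>] v(2) card(1) card_Diff by simp
  finally show "p + (N - real m) * (\<beta> * L - c) \<le> real (num_edges (V - {v}) E) - c * real m ^ 2" .
qed

text \<open>\<open>p + (N - |U|) (\<beta> L - c)\<close> bounds the potential \<open>e(U) - c |U|\<^sup>2\<close> from below after
\<open>N - |U|\<close> deletions, and \<open>stop\<close> says that this bound exceeds \<open>\<gamma> |U|\<^sup>2\<close> once \<open>|U| \<le> L + 1\<close>.\<close>

lemma delete_low_degree_vertices:
  fixes r :: nat and \<beta> \<gamma> L N p :: real
  defines "c \<equiv> turan_density r"
  assumes r: "0 < r" and \<beta>: "0 \<le> \<beta>" "1 \<le> \<beta> * L"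
    and stop: "\<And>m. L < m \<Longrightarrow> m \<le> L + 1 \<Longrightarrow> \<gamma> * m ^ 2 < p + (N - m) * (\<beta> * L - c)"
  shows "simple_graph V E \<Longrightarrow> L < real (card V) \<Longrightarrow> turan_sum r (card V) < num_edges V E \<Longrightarrow>
    p + (N - real (card V)) * (\<beta> * L - c) \<le> real (num_edges V E) - c * real (card V) ^ 2 \<Longrightarrow>
    \<exists>U\<subseteq>V. L < real (card U) \<and>
      ((has_clique U E (r + 1) \<and> (2 * c - \<beta>) * real (card U) < real (min_degree U E))
       \<or> (c + \<gamma>) * real (card U) ^ 2 < real (num_edges U E))"
proof (induction "card V" arbitrary: V)
  case 0
  then have "\<beta> * L \<le> 0"
    using \<beta>(1) by (simp add: mult_nonneg_nonpos)
  with \<beta>(2) show ?case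
    by linarith
next
  case (Suc m)
  note card = Suc.hyps(2)[symmetric]
  consider "(c + \<gamma>) * real (Suc m) ^ 2 < real (num_edges V E)"
    | "\<forall>v\<in>V. (2 * c - \<beta>) * real (Suc m) < real (degree V E v)"
    | v where "v \<in> V" "real (degree V E v) \<le> (2 * c - \<beta>) * real (Suc m)"
      "real (num_edges V E) \<le> (c + \<gamma>) * real (Suc m) ^ 2"
    by (meson not_le)
  then show ?case
  proof cases
    case 1
    then show ?thesis
      using Suc.prems(2) card by auto
  next
    case 2
    have "has_clique V E (r + 1)"
      using turan[OF r Suc.prems(1)] Suc.prems(3) by (meson not_le)
    moreover have "finite V" "V \<noteq> {}"
      using Suc.prems(1) card by (auto simp: simple_graph_def)
    then have "(2 * c - \<beta>) * real (card V) < real (min_degree V E)"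
      using 2 card by (simp add: min_degree_gt_iff)
    ultimately show ?thesis
      using Suc.prems(2) by blast
  next
    case 3
    have step: "turan_sum r m < num_edges (V - {v}) E"
      "p + (N - real m) * (\<beta> * L - c) \<le> real (num_edges (V - {v}) E) - c * real m ^ 2"
      using delete_low_degree_vertex[OF r \<beta> Suc.prems(1) card] Suc.prems(2-4) 3(1,2)
      unfolding c_def card by auto
    have "L < real m"
    proof (rule ccontr)
      assume "\<not> L < real m"
      then have "\<gamma> * real (Suc m) ^ 2 < p + (N - real (Suc m)) * (\<beta> * L - c)"
        using Suc.prems(2) card by (intro stop) auto
      then show False
        using Suc.prems(4) card 3(3) by (simp add: algebra_simps)
    qed
    moreover have card_Diff: "card (V - {v}) = m"
      using 3(1) card Suc.prems(1) by (simp add: simple_graph_def)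
    ultimately show ?thesis
      using Suc.hyps(1)[OF card_Diff[symmetric] simple_graph_subset[OF Suc.prems(1) Diff_subset]] step
      unfolding card_Diff by blast
  qed
qed

section \<open>The numerical condition\<close>

lemma stop_condition_worst_case:
  fixes N q :: real
  assumes q: "4 \<le> q" and N: "q ^ 4 < N"
  shows "(N * (q - 1) / q + 1) ^ 2 / (q ^ 2 * (q - 1)) < - N / 2 + (N / q - 1) * (N / q ^ 2 - 1 / 2)"
proof -
  have q0: "0 < q" "0 < q - 1"
    using q by auto
  have N0: "0 < N"
    using N q0 zero_less_power[of q 4] by linarith
  have q_power: "q ^ 3 + 2 * q ^ 2 + 4 * q \<le> q ^ 4"
  proof -
    have "4 * q ^ 2 \<le> q ^ 3" "4 * q \<le> q ^ 2"
      using q by (simp_all add: power3_eq_cube power2_eq_square)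
    then have "q ^ 2 + 2 * q + 4 \<le> q ^ 3"
      using q by linarith
    then have "q * (q ^ 2 + 2 * q + 4) \<le> q * q ^ 3"
      using q0 by (intro mult_left_mono) auto
    then show ?thesis
      by (simp add: algebra_simps power2_eq_square power3_eq_cube power4_eq_xxxx)
  qed
  have "N * q ^ 4 * (q - 1) < N ^ 2 * (q - 1)"
    using N N0 q0 by (simp add: power2_eq_square)
  moreover have "N * (q - 1) * (q ^ 3 + 2 * q ^ 2 + 4 * q) \<le> N * (q - 1) * q ^ 4"
    using q_power N0 q0 by (intro mult_left_mono) auto
  moreover have "2 * q ^ 2 < q ^ 4 * (q - 1)"
  proof -
    have "16 \<le> q ^ 2" "3 \<le> q - 1"
      using q power_mono[OF q, of 2] by simp_all
    then have "2 * 1 < q ^ 2 * (q - 1)"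
      using mult_mono[of 16 "q ^ 2" 3 "q - 1"] by linarith
    then have "q ^ 2 * 2 < q ^ 2 * (q ^ 2 * (q - 1))"
      using q0 by (intro mult_strict_left_mono) auto
    then show ?thesis
      by (simp add: algebra_simps power2_eq_square power4_eq_xxxx)
  qed
  ultimately have numerator: "0 < 2 * N ^ 2 * (q - 1) - N * (q - 1) * (q ^ 4 + q ^ 3 + 2 * q ^ 2 + 4 * q)
      + q ^ 4 * (q - 1) - 2 * q ^ 2"
    by (simp add: algebra_simps)
  have "(- N / 2 + (N / q - 1) * (N / q ^ 2 - 1 / 2)) - (N * (q - 1) / q + 1) ^ 2 / (q ^ 2 * (q - 1))
     = (2 * N ^ 2 * (q - 1) - N * (q - 1) * (q ^ 4 + q ^ 3 + 2 * q ^ 2 + 4 * q)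
        + q ^ 4 * (q - 1) - 2 * q ^ 2) / (2 * q ^ 4 * (q - 1))"
    using q0 by (simp add: field_simps) (simp add: algebra_simps power_numeral_reduce)
  moreover have "0 < \<dots>"
    using numerator q0 by (intro divide_pos_pos) auto
  ultimately show ?thesis
    by linarith
qed

lemma stop_condition:
  fixes q N c m :: real
  assumes q: "4 \<le> q" and N: "q ^ 4 < N" and c: "0 \<le> c" "c \<le> 1 / 2"
    and m: "N * (q - 1) / q < m" "m \<le> N * (q - 1) / q + 1"
  shows "m ^ 2 / (q ^ 2 * (q - 1)) < - c * N + (N - m) * (N / q ^ 2 - c)"
proof -
  have q0: "0 < q" "0 < q - 1"
    using q by auto
  have N0: "0 < N"
    using N q0 zero_less_power[of q 4] by linarith
  have "q ^ 1 \<le> q ^ 4" "q ^ 2 \<le> q ^ 4"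
    using q by (intro power_increasing; simp)+
  then have "q \<le> N" "q ^ 2 \<le> N"
    using N by simp_all
  then have "0 \<le> N / q - 1" "1 \<le> N / q ^ 2"
    using q0 by simp_all
  moreover have "N / q - 1 \<le> N - m"
    using m q0 by (simp add: field_simps)
  ultimately have "(N / q - 1) * (N / q ^ 2 - 1 / 2) \<le> (N - m) * (N / q ^ 2 - c)"
    using c by (intro mult_mono) linarith+
  moreover have "- N / 2 \<le> - c * N"
    using c N0 by simp
  moreover have "0 \<le> m"
    using m(1) q0 N0 by (smt (verit) divide_pos_pos mult_pos_pos)
  then have "m ^ 2 / (q ^ 2 * (q - 1)) \<le> (N * (q - 1) / q + 1) ^ 2 / (q ^ 2 * (q - 1))"
    using m(2) q0 by (intro divide_right_mono power_mono) auto
  ultimately show ?thesis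
    using stop_condition_worst_case[OF q N] by linarith
qed

text \<open>The parameters of the deletion process for \<open>q = r\<^sup>2\<close>: \<open>\<beta> = 1 / (q (q - 1))\<close>,
\<open>\<gamma> = 1 / (q\<^sup>2 (q - 1))\<close> and \<open>p = -c N\<close>.\<close>

lemma deletion_parameters:
  fixes q N c :: real
  defines "L \<equiv> (1 - 1 / q) * N"
  assumes q: "4 \<le> q" and N: "q ^ 4 < N" and c: "0 \<le> c" "c \<le> 1 / 2"
  shows "0 \<le> 1 / (q * (q - 1))" "1 \<le> 1 / (q * (q - 1)) * L" "L < N"
    and "\<And>m. L < m \<Longrightarrow> m \<le> L + 1 \<Longrightarrow>
      1 / (q ^ 2 * (q - 1)) * m ^ 2 < - c * N + (N - m) * (1 / (q * (q - 1)) * L - c)"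
proof -
  have L: "L = N * (q - 1) / q" "1 / (q * (q - 1)) * L = N / q ^ 2"
    unfolding L_def using q by (simp_all add: field_simps power2_eq_square)
  have "q ^ 2 \<le> q ^ 4" "0 < q ^ 4"
    using q by (auto intro: power_increasing)
  then have "q ^ 2 \<le> N" "0 < N"
    using N by linarith+
  then show "0 \<le> 1 / (q * (q - 1))" "1 \<le> 1 / (q * (q - 1)) * L" "L < N"
    using q unfolding L(2) unfolding L(1) by (simp_all add: field_simps)
  show "1 / (q ^ 2 * (q - 1)) * m ^ 2 < - c * N + (N - m) * (1 / (q * (q - 1)) * L - c)"
    if "L < m" "m \<le> L + 1" for m
    using stop_condition[OF q N c, of m] that unfolding L(2) unfolding L(1) by simp
qed

theorem theorem6:
  fixes r n :: nat and V :: "'a set" and E :: "'a \<Rightarrow> 'a \<Rightarrow> bool"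
  assumes "r \<ge> 2" and "real n > real r ^ 8"
    and "simple_graph V E" and "card V = n"
    and "num_edges V E > turan_num r n"
  shows "\<exists>U \<subseteq> V. real (card U) > (1 - 1 / real r ^ 2) * real n \<and>
           ((has_clique U E (r + 1) \<and>
             real (min_degree U E) >
               ((real r - 1) / real r - 1 / (real r ^ 2 * (real r ^ 2 - 1))) * real (card U))
            \<or> real (num_edges U E) >
               ((real r - 1) / (2 * real r) + 1 / (real r ^ 4 * (real r ^ 2 - 1))) * real (card U) ^ 2)"
proof -
  define q where "q = real r ^ 2"
  define c where "c = turan_density r"
  define L where "L = (1 - 1 / q) * real n"
  have r: "0 < r" and q: "4 \<le> q" and N: "q ^ 4 < real n"
    using assms(1,2) power_mono[of 2 "real r" 2] unfolding q_def by (simp_all flip: power_mult)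
  have "0 \<le> c" "c \<le> 1 / 2"
    unfolding c_def turan_density_def using r by simp_all
  note parameters = deletion_parameters[OF q N this, folded L_def]
  have "turan_sum r n < num_edges V E"
    using turan_sum_le_turan_num[OF r, of n] assms(5) by simp
  moreover have "- c * real n + (real n - real n) * (1 / (q * (q - 1)) * L - c)
      \<le> real (num_edges V E) - c * real n ^ 2"
    using turan_sum_ge[OF r, of n] \<open>turan_sum r n < num_edges V E\<close>
    unfolding c_def by (simp add: algebra_simps)
  ultimately obtain U where "U \<subseteq> V" "L < real (card U)"
    "(has_clique U E (r + 1) \<and> (2 * c - 1 / (q * (q - 1))) * real (card U) < real (min_degree U E))
     \<or> (c + 1 / (q ^ 2 * (q - 1))) * real (card U) ^ 2 < real (num_edges U E)"
    using delete_low_degree_vertices[of r _ L _ "- c * real n" "real n", folded c_def,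
        OF r parameters(1,2,4) assms(3)] parameters(3)
    unfolding assms(4) by blast
  moreover have "2 * c = (real r - 1) / real r" "q ^ 2 = real r ^ 4"
    unfolding q_def c_def turan_density_def using r by (simp_all add: field_simps flip: power_mult)
  ultimately show ?thesis
    unfolding L_def q_def c_def turan_density_def by auto
qed

end
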